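(* Let $u$ be an inner function and let $f \in H^2$ be a unit vector with expansion $f = F_0 + uF_1 + u^2F_2 + \cdots$ (convergent in $H^2$), where $F_j \in \mathcal{K}_u$ for all $j\ge 0$. Then $f$ is $T_u$-inner if and only if $$\sum_{k=0}^\infty \langle F_k, F_{N+k}\rangle = 0 \quad \text{for all } N \ge 1.$$
   Context: $H^2$ is the Hardy space on the unit disk with inner product $\langle f,g\rangle=\int_{\mathbb{T}} f\overline{g}\,dm$ ($m$ normalized Lebesgue measure on $\mathbb{T}$). An inner function is an $H^\infty$ function with unimodular boundary values a.e. The model space is $\mathcal{K}_u=(uH^2)^\perp$. $T_u f = uf$ on $H^2$. A unit vector $f\in H^2$ is $T_u$-inner if $\langle T_u^n f, f\rangle = 0$ for all $n\ge1$. *)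

theory Defs
  imports "HOL-Complex_Analysis.Complex_Analysis"
begin

text \<open>Functions on the unit disk are represented as complex functions; only their
values on the open unit disk (ball 0 1) matter.\<close>

definition circle_mean :: "real \<Rightarrow> (complex \<Rightarrow> complex) \<Rightarrow> complex" where
  "circle_mean r h = integral {0..2*pi} (\<lambda>t. h (complex_of_real r * cis t)) / (2 * pi)"

definition H2 :: "(complex \<Rightarrow> complex) set" where
  "H2 = {f. f holomorphic_on ball 0 1 \<and>
           (\<exists>B. \<forall>r\<in>{0..<1}. Re (circle_mean r (\<lambda>z. complex_of_real ((cmod (f z))\<^sup>2))) \<le> B)}"

text \<open>H^2 inner product: the integral over T of f times conj g of the boundary values,
computed as the limit of the integral means on circles of radius r \<rightarrow> 1.\<close>
definition h2_inner :: "(complex \<Rightarrow> complex) \<Rightarrow> (complex \<Rightarrow> complex) \<Rightarrow> complex" where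
  "h2_inner f g = Lim (at_left (1::real)) (\<lambda>r. circle_mean r (\<lambda>z. f z * cnj (g z)))"

definition h2_norm :: "(complex \<Rightarrow> complex) \<Rightarrow> real" where
  "h2_norm f = sqrt (Re (h2_inner f f))"

definition inner_function :: "(complex \<Rightarrow> complex) \<Rightarrow> bool" where
  "inner_function u \<longleftrightarrow> u holomorphic_on ball 0 1 \<and> bounded (u ` ball 0 1) \<and>
     (AE t in lebesgue_on {0..2*pi}.
        \<exists>L. ((\<lambda>r. u (complex_of_real r * cis t)) \<longlongrightarrow> L) (at_left 1) \<and> cmod L = 1)"

definition model_space :: "(complex \<Rightarrow> complex) \<Rightarrow> (complex \<Rightarrow> complex) set" where
  "model_space u = {g \<in> H2. \<forall>h\<in>H2. h2_inner g (\<lambda>z. u z * h z) = 0}"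

definition Tu_inner :: "(complex \<Rightarrow> complex) \<Rightarrow> (complex \<Rightarrow> complex) \<Rightarrow> bool" where
  "Tu_inner u f \<longleftrightarrow> f \<in> H2 \<and> h2_norm f = 1 \<and>
     (\<forall>n::nat. n \<ge> 1 \<longrightarrow> h2_inner (\<lambda>z. u z ^ n * f z) f = 0)"

end

theory Submission
  imports Defs
begin

text \<open>
Taylor coefficients identify H^2 with l^2: Parseval's identity on the circles of radius r < 1,
combined with Abel's theorem as r tends to 1, shows that the H^2 inner product is the l^2 pairing
of the coefficient sequences. Multiplication by an inner function u is an isometry of H^2: for
functions continuous on the closed disk this is dominated convergence, using that u has
unimodular radial limits almost everywhere, and polynomials are dense. Hence the subspaces
u^j K_u are mutually orthogonal: by the isometry, <u^m F, u^n G> reduces to <F, u^d G> with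
d = n - m, which vanishes for d > 0 because u^d G lies in u H^2. Expanding f = sum_j u^j F_j and
using the continuity of the inner product gives <T_u^N f, f> = sum_k <F_k, F_{N+k}>, and the
equivalence follows at once.
\<close>

section \<open>Taylor coefficients\<close>

definition taylor_coeff :: "(complex \<Rightarrow> complex) \<Rightarrow> nat \<Rightarrow> complex" where
  "taylor_coeff g n = (deriv ^^ n) g 0 / fact n"

lemma taylor_coeff_sums:
  assumes "g holomorphic_on ball 0 1" "norm z < 1"
  shows "(\<lambda>n. taylor_coeff g n * z ^ n) sums g z"
  using holomorphic_power_series[OF assms(1), of z] assms(2) by (simp add: taylor_coeff_def)

lemma summable_norm_taylor_coeff_mult_power:
  assumes "g holomorphic_on ball 0 1" "0 \<le> r" "r < 1"
  shows "summable (\<lambda>n. norm (taylor_coeff g n) * r ^ n)"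
proof -
  let ?x = "complex_of_real ((1 + r) / 2)"
  have "norm ?x < 1"
    using assms by (simp only: norm_of_real) simp
  then have "summable (\<lambda>n. taylor_coeff g n * ?x ^ n)"
    using taylor_coeff_sums[OF assms(1)] by (simp add: sums_iff)
  then have "summable (\<lambda>n. norm (taylor_coeff g n * complex_of_real r ^ n))"
    by (rule powser_insidea) (use assms in \<open>simp only: norm_of_real; simp\<close>)
  then show ?thesis using assms by (simp add: norm_mult norm_power)
qed

lemma taylor_coeff_add:
  "g holomorphic_on ball 0 1 \<Longrightarrow> h holomorphic_on ball 0 1 \<Longrightarrow>
   taylor_coeff (\<lambda>z. g z + h z) n = taylor_coeff g n + taylor_coeff h n"
  unfolding taylor_coeff_def
  by (subst higher_deriv_add[of g "ball 0 1" h]) (auto simp: add_divide_distrib)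

lemma taylor_coeff_diff:
  "g holomorphic_on ball 0 1 \<Longrightarrow> h holomorphic_on ball 0 1 \<Longrightarrow>
   taylor_coeff (\<lambda>z. g z - h z) n = taylor_coeff g n - taylor_coeff h n"
  unfolding taylor_coeff_def
  by (subst higher_deriv_diff[of g "ball 0 1" h]) (auto simp: diff_divide_distrib)

lemma taylor_coeff_cmult:
  "g holomorphic_on ball 0 1 \<Longrightarrow> taylor_coeff (\<lambda>z. c * g z) n = c * taylor_coeff g n"
  unfolding taylor_coeff_def by (subst higher_deriv_cmult[of g "ball 0 1"]) auto

lemma taylor_coeff_zero [simp]: "taylor_coeff (\<lambda>z. 0) n = 0"
  unfolding taylor_coeff_def by simp

lemma taylor_coeff_sum:
  assumes "finite A" "\<And>j. j \<in> A \<Longrightarrow> G j holomorphic_on ball 0 1"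
  shows "taylor_coeff (\<lambda>z. \<Sum>j\<in>A. G j z) n = (\<Sum>j\<in>A. taylor_coeff (G j) n)"
  using assms
proof (induction A rule: finite_induct)
  case (insert a A)
  then show ?case
    by (simp add: taylor_coeff_add holomorphic_on_sum)
qed simp

lemma taylor_coeff_power: "taylor_coeff (\<lambda>z. z ^ m) n = (if n = m then 1 else 0)"
proof -
  have "(deriv ^^ n) (\<lambda>z. (z - 0) ^ m) 0 = pochhammer (of_nat (Suc m - n)) n * (0 - 0) ^ (m - n)"
    by (rule higher_deriv_power)
  then show ?thesis
    by (cases "n < m") (auto simp: taylor_coeff_def pochhammer_fact[symmetric] pochhammer_0_left)
qed

lemma taylor_coeff_polynomial:
  "taylor_coeff (\<lambda>z. \<Sum>m<N. c m * z ^ m) n = (if n < N then c n else 0)"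
  by (simp add: taylor_coeff_sum taylor_coeff_cmult taylor_coeff_power holomorphic_intros
      if_distrib[of "\<lambda>x. _ * x"] cong: if_cong)

section \<open>Parseval's identity on circles\<close>

lemma cis_int_mult_has_integral:
  fixes k :: int
  shows "((\<lambda>t. cis (of_int k * t))
           has_integral complex_of_real (if k = 0 then 2 * pi else 0)) {0..2*pi}"
proof (cases "k = 0")
  case True
  then show ?thesis using has_integral_const_real[of "1::complex" 0 "2*pi"]
    by (simp add: scaleR_conv_of_real)
next
  case False
  let ?F = "\<lambda>t. cis (of_int k * t) / (\<i> * of_int k)"
  have "(?F has_vector_derivative cis (of_int k * t)) (at t within {0..2*pi})" for t
  proof -
    have "((\<lambda>t. cis (of_int k * t)) has_vector_derivative (of_int k * \<i> * cis (of_int k * t)))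
            (at t within {0..2*pi})"
      unfolding has_vector_derivative_def
      by (rule has_derivative_eq_rhs, (rule has_derivative_cis derivative_eq_intros)+)
         (auto simp: scaleR_conv_of_real algebra_simps)
    from has_vector_derivative_divide[OF this, of "\<i> * of_int k"] show ?thesis
      using False by simp
  qed
  from fundamental_theorem_of_calculus[OF _ this]
  have "((\<lambda>t. cis (of_int k * t)) has_integral ?F (2*pi) - ?F 0) {0..2*pi}" by simp
  moreover have "cis (of_int k * (2*pi)) = 1"
    by (metis cis_multiple_2pi mult.commute Ints_of_int)
  ultimately show ?thesis using False by simp
qed

lemma circle_monomial_product_has_integral:
  "((\<lambda>t. (complex_of_real r * cis t) ^ n * cnj ((complex_of_real r * cis t) ^ m))
     has_integral of_real (if n = m then 2 * pi * r ^ (2 * n) else 0)) {0..2*pi}"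
proof -
  have cis: "cis t ^ n * cnj (cis t ^ m) = cis (of_int (int n - int m) * t)" for t
    by (simp only: complex_cnj_power cis_cnj Complex.DeMoivre cis_mult) (simp add: algebra_simps)
  have factor: "(complex_of_real r * cis t) ^ n * cnj ((complex_of_real r * cis t) ^ m)
      = of_real (r ^ (n + m)) * (cis t ^ n * cnj (cis t ^ m))" for t
    by (simp add: power_mult_distrib power_add)
  have "((\<lambda>t. of_real (r ^ (n + m)) * cis (of_int (int n - int m) * t))
      has_integral of_real (r ^ (n + m)) * of_real (if int n - int m = 0 then 2 * pi else 0))
      {0..2*pi}"
    by (rule has_integral_mult_right[OF cis_int_mult_has_integral])
  moreover have "of_real (r ^ (n + m)) * of_real (if int n - int m = 0 then 2 * pi else 0)
      = complex_of_real (if n = m then 2 * pi * r ^ (2 * n) else 0)"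
    by (cases "n = m") (simp_all add: power_add flip: mult_2)
  ultimately show ?thesis
    by (simp only: factor cis)
qed

lemma circle_polynomial_product_has_integral:
  "((\<lambda>t. (\<Sum>n<N. a n * (complex_of_real r * cis t) ^ n) *
          cnj (\<Sum>m<N. b m * (complex_of_real r * cis t) ^ m))
     has_integral 2 * pi * (\<Sum>n<N. a n * cnj (b n) * of_real (r ^ (2 * n)))) {0..2*pi}"
proof -
  let ?z = "\<lambda>t. complex_of_real r * cis t"
  have "(\<Sum>n<N. a n * ?z t ^ n) * cnj (\<Sum>m<N. b m * ?z t ^ m)
          = (\<Sum>n<N. \<Sum>m<N. a n * cnj (b m) * (?z t ^ n * cnj (?z t ^ m)))" for t
    by (simp add: sum_product cnj_sum algebra_simps)
  moreover have "((\<lambda>t. \<Sum>n<N. \<Sum>m<N. a n * cnj (b m) * (?z t ^ n * cnj (?z t ^ m)))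
      has_integral
        (\<Sum>n<N. \<Sum>m<N. a n * cnj (b m) * of_real (if n = m then 2 * pi * r ^ (2 * n) else 0)))
      {0..2*pi}"
    by (intro has_integral_sum finite_lessThan has_integral_mult_right
        circle_monomial_product_has_integral)
  moreover have "(\<Sum>n<N. \<Sum>m<N. a n * cnj (b m) * of_real (if n = m then 2 * pi * r ^ (2 * n) else 0))
      = (\<Sum>n<N. a n * cnj (b n) * of_real (2 * pi * r ^ (2 * n)))"
    by (intro sum.cong refl)
       (simp add: if_distrib[of complex_of_real] if_distrib[of "times _"] sum.delta cong: if_cong)
  moreover have "\<dots> = 2 * pi * (\<Sum>n<N. a n * cnj (b n) * of_real (r ^ (2 * n)))"
    by (simp add: sum_distrib_left mult_ac)
  ultimately show ?thesis
    by simp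
qed

lemma continuous_on_compose_circle:
  assumes "continuous_on S g" "\<And>t. complex_of_real r * cis t \<in> S"
  shows "continuous_on A (\<lambda>t. g (complex_of_real r * cis t))"
  by (rule continuous_on_compose2[OF assms(1)]) (auto intro!: continuous_intros assms(2))

lemma circle_in_ball: "0 \<le> r \<Longrightarrow> r < 1 \<Longrightarrow> complex_of_real r * cis t \<in> ball 0 1"
  by (simp add: norm_mult)

lemma taylor_partial_sums_uniform_limit_circle:
  assumes "g holomorphic_on ball 0 1" "0 \<le> r" "r < 1"
  shows "uniform_limit S (\<lambda>N t. \<Sum>n<N. taylor_coeff g n * (complex_of_real r * cis t) ^ n)
           (\<lambda>t. g (complex_of_real r * cis t)) sequentially"
proof -
  have "uniform_limit S (\<lambda>N t. \<Sum>n<N. taylor_coeff g n * (complex_of_real r * cis t) ^ n)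
          (\<lambda>t. \<Sum>n. taylor_coeff g n * (complex_of_real r * cis t) ^ n) sequentially"
    by (rule Weierstrass_m_test[where M = "\<lambda>n. norm (taylor_coeff g n) * r ^ n"])
       (use assms in \<open>auto simp: norm_mult norm_power
          intro: summable_norm_taylor_coeff_mult_power\<close>)
  moreover have "(\<Sum>n. taylor_coeff g n * (complex_of_real r * cis t) ^ n)
                   = g (complex_of_real r * cis t)" for t
    using taylor_coeff_sums[OF assms(1)] assms(2,3) by (simp add: sums_iff norm_mult)
  ultimately show ?thesis
    by simp
qed

lemma circle_mean_mult_cnj_sums:
  assumes g: "g holomorphic_on ball 0 1" and h: "h holomorphic_on ball 0 1"
    and r: "0 \<le> r" "r < 1"
  shows "(\<lambda>n. taylor_coeff g n * cnj (taylor_coeff h n) * of_real (r ^ (2 * n)))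
           sums circle_mean r (\<lambda>z. g z * cnj (h z))"
proof -
  let ?z = "\<lambda>t. complex_of_real r * cis t"
  have cont: "continuous_on {0..2*pi} (\<lambda>t. k (?z t))" if "k holomorphic_on ball 0 1" for k
    using continuous_on_compose_circle[OF holomorphic_on_imp_continuous_on[OF that]]
      circle_in_ball[OF r] by blast
  have "uniform_limit {0..2*pi}
          (\<lambda>N t. (\<Sum>n<N. taylor_coeff g n * ?z t ^ n) * cnj (\<Sum>n<N. taylor_coeff h n * ?z t ^ n))
          (\<lambda>t. g (?z t) * cnj (h (?z t))) sequentially"
    using cont[OF g] cont[OF h]
    by (intro uniform_lim_mult bounded_linear.uniform_limit[OF bounded_linear_cnj]
        taylor_partial_sums_uniform_limit_circle g h r compact_imp_bounded
        compact_continuous_image continuous_intros) auto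
  moreover have "continuous_on {0..2*pi} (\<lambda>t. (\<Sum>n<N. taylor_coeff g n * ?z t ^ n) *
                   cnj (\<Sum>n<N. taylor_coeff h n * ?z t ^ n))" for N
    by (intro continuous_intros)
  ultimately obtain I J
    where I: "\<And>N. ((\<lambda>t. (\<Sum>n<N. taylor_coeff g n * ?z t ^ n) *
                cnj (\<Sum>n<N. taylor_coeff h n * ?z t ^ n)) has_integral I N) {0..2*pi}"
      and J: "((\<lambda>t. g (?z t) * cnj (h (?z t))) has_integral J) {0..2*pi}"
      and lim: "I \<longlonglongrightarrow> J"
    using uniform_limit_integral[OF _ _ trivial_limit_sequentially] by blast
  have "I N / (2 * pi)
          = (\<Sum>n<N. taylor_coeff g n * cnj (taylor_coeff h n) * of_real (r ^ (2 * n)))" for N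
    using has_integral_unique[OF I circle_polynomial_product_has_integral] by simp
  moreover have "circle_mean r (\<lambda>z. g z * cnj (h z)) = J / (2 * pi)"
    unfolding circle_mean_def using integral_unique[OF J] by simp
  moreover have "(\<lambda>N. I N / (2 * pi)) \<longlonglongrightarrow> J / (2 * pi)"
    using lim by (rule tendsto_divide) simp_all
  ultimately show ?thesis
    unfolding sums_def by simp
qed

lemma circle_mean_norm_sq_sums:
  assumes "g holomorphic_on ball 0 1" "0 \<le> r" "r < 1"
  shows "(\<lambda>n. (norm (taylor_coeff g n))\<^sup>2 * r ^ (2 * n))
           sums Re (circle_mean r (\<lambda>z. complex_of_real ((cmod (g z))\<^sup>2)))"
proof -
  have "(\<lambda>n. Re (taylor_coeff g n * cnj (taylor_coeff g n) * of_real (r ^ (2 * n))))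
          sums Re (circle_mean r (\<lambda>z. g z * cnj (g z)))"
    using circle_mean_mult_cnj_sums[OF assms(1) assms] by (simp only: sums_complex_iff)
  then show ?thesis
    by (simp only: Re_complex_of_real flip: complex_norm_square of_real_mult of_real_power)
qed

section \<open>H2 as a space of square-summable coefficient sequences\<close>

lemma H2_imp_holomorphic: "g \<in> H2 \<Longrightarrow> g holomorphic_on ball 0 1"
  unfolding H2_def by blast

lemma H2_imp_summable_taylor_coeff:
  assumes "g \<in> H2"
  shows "summable (\<lambda>n. (norm (taylor_coeff g n))\<^sup>2)"
proof -
  obtain B where
    B: "\<And>r. r \<in> {0..<1} \<Longrightarrow> Re (circle_mean r (\<lambda>z. complex_of_real ((cmod (g z))\<^sup>2))) \<le> B"
    using assms unfolding H2_def by blast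
  have partial_sums_bounded: "(\<Sum>n<N. (norm (taylor_coeff g n))\<^sup>2) \<le> B" for N
  proof (rule tendsto_upperbound)
    show "((\<lambda>r. \<Sum>n<N. (norm (taylor_coeff g n))\<^sup>2 * r ^ (2 * n)) \<longlongrightarrow>
            (\<Sum>n<N. (norm (taylor_coeff g n))\<^sup>2)) (at_left (1::real))"
      by (auto intro!: tendsto_eq_intros)
    show "\<forall>\<^sub>F r in at_left 1. (\<Sum>n<N. (norm (taylor_coeff g n))\<^sup>2 * r ^ (2 * n)) \<le> B"
      using eventually_at_left_real[OF zero_less_one]
    proof (rule eventually_mono)
      fix r :: real
      assume r: "r \<in> {0<..<1}"
      note sums = circle_mean_norm_sq_sums[OF H2_imp_holomorphic[OF assms], of r]
      have "(\<Sum>n<N. (norm (taylor_coeff g n))\<^sup>2 * r ^ (2 * n))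
              \<le> Re (circle_mean r (\<lambda>z. complex_of_real ((cmod (g z))\<^sup>2)))"
        using sum_le_suminf[OF sums_summable[OF sums]] sums_unique[OF sums] r by auto
      also have "\<dots> \<le> B"
        using B r by auto
      finally show "(\<Sum>n<N. (norm (taylor_coeff g n))\<^sup>2 * r ^ (2 * n)) \<le> B" .
    qed
  qed simp
  show ?thesis
    by (rule bounded_imp_summable[where B = B])
       (use partial_sums_bounded[of "Suc _"] in \<open>simp_all only: lessThan_Suc_atMost zero_le_power2\<close>)
qed

lemma H2_iff_summable_taylor_coeff:
  "g \<in> H2 \<longleftrightarrow> g holomorphic_on ball 0 1 \<and> summable (\<lambda>n. (norm (taylor_coeff g n))\<^sup>2)"
proof (intro iffI conjI)
  assume g: "g holomorphic_on ball 0 1 \<and> summable (\<lambda>n. (norm (taylor_coeff g n))\<^sup>2)"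
  have "Re (circle_mean r (\<lambda>z. complex_of_real ((cmod (g z))\<^sup>2)))
          \<le> (\<Sum>n. (norm (taylor_coeff g n))\<^sup>2)" if r: "r \<in> {0..<1}" for r
  proof -
    note sums = circle_mean_norm_sq_sums[of g r]
    have "(\<Sum>n. (norm (taylor_coeff g n))\<^sup>2 * r ^ (2 * n)) \<le> (\<Sum>n. (norm (taylor_coeff g n))\<^sup>2)"
      using g r sums
      by (intro suminf_le) (auto simp: sums_iff intro!: mult_left_le power_le_one)
    then show ?thesis
      using g r sums by (simp add: sums_iff)
  qed
  then show "g \<in> H2"
    using g unfolding H2_def by blast
qed (simp_all add: H2_imp_holomorphic H2_imp_summable_taylor_coeff)

lemma summable_norm_taylor_coeff_product:
  assumes "g \<in> H2" "h \<in> H2"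
  shows "summable (\<lambda>n. norm (taylor_coeff g n * cnj (taylor_coeff h n)))"
proof (rule summable_comparison_test)
  show "\<exists>N. \<forall>n\<ge>N. norm (norm (taylor_coeff g n * cnj (taylor_coeff h n)))
          \<le> ((norm (taylor_coeff g n))\<^sup>2 + (norm (taylor_coeff h n))\<^sup>2) / 2"
  proof (intro exI allI impI)
    fix n
    show "norm (norm (taylor_coeff g n * cnj (taylor_coeff h n)))
            \<le> ((norm (taylor_coeff g n))\<^sup>2 + (norm (taylor_coeff h n))\<^sup>2) / 2"
      using sum_squares_bound[of "norm (taylor_coeff g n)" "norm (taylor_coeff h n)"]
      by (simp add: norm_mult algebra_simps)
  qed
  show "summable (\<lambda>n. ((norm (taylor_coeff g n))\<^sup>2 + (norm (taylor_coeff h n))\<^sup>2) / 2)"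
    using assms by (intro summable_divide summable_add H2_imp_summable_taylor_coeff)
qed

text \<open>Abel's theorem: the coefficient products are absolutely summable, so the series in r^2
  converges uniformly on [0, 1].\<close>

lemma circle_mean_tendsto_suminf:
  assumes g: "g \<in> H2" and h: "h \<in> H2"
  shows "((\<lambda>r. circle_mean r (\<lambda>z. g z * cnj (h z))) \<longlongrightarrow>
           (\<Sum>n. taylor_coeff g n * cnj (taylor_coeff h n))) (at_left 1)"
proof -
  define c where "c n = taylor_coeff g n * cnj (taylor_coeff h n)" for n
  define \<phi> where "\<phi> r = (\<Sum>n. c n * of_real (r ^ (2 * n)))" for r :: real
  have "uniform_limit {0..1} (\<lambda>N r. \<Sum>n<N. c n * of_real (r ^ (2 * n))) \<phi> sequentially"
    unfolding \<phi>_def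
    by (rule Weierstrass_m_test[where M = "\<lambda>n. norm (c n)"])
       (use summable_norm_taylor_coeff_product[OF g h] in
         \<open>auto simp: c_def norm_mult norm_power intro!: mult_left_le power_le_one\<close>)
  then have "continuous_on {0..1} \<phi>"
    by (rule uniform_limit_theorem[rotated]) (auto intro!: always_eventually continuous_intros)
  then have "(\<phi> \<longlongrightarrow> \<phi> 1) (at 1 within {0..1})"
    unfolding continuous_on_def by simp
  then have "(\<phi> \<longlongrightarrow> \<phi> 1) (at_left 1)"
    by (simp add: at_within_Icc_at_left)
  moreover have "\<forall>\<^sub>F r in at_left (1::real). \<phi> r = circle_mean r (\<lambda>z. g z * cnj (h z))"
    using eventually_at_left_real[OF zero_less_one]
    by (rule eventually_mono)
       (use circle_mean_mult_cnj_sums H2_imp_holomorphic g h in \<open>auto simp: \<phi>_def c_def sums_iff\<close>)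
  ultimately show ?thesis
    by (simp add: tendsto_cong \<phi>_def c_def)
qed

lemma h2_inner_eq_suminf:
  assumes "g \<in> H2" "h \<in> H2"
  shows "h2_inner g h = (\<Sum>n. taylor_coeff g n * cnj (taylor_coeff h n))"
  unfolding h2_inner_def by (rule tendsto_Lim[OF _ circle_mean_tendsto_suminf[OF assms]]) simp

lemma circle_mean_tendsto_h2_inner:
  assumes "g \<in> H2" "h \<in> H2"
  shows "((\<lambda>r. circle_mean r (\<lambda>z. g z * cnj (h z))) \<longlongrightarrow> h2_inner g h) (at_left 1)"
  using circle_mean_tendsto_suminf[OF assms] h2_inner_eq_suminf[OF assms] by simp

lemma H2_zero: "(\<lambda>z. 0) \<in> H2"
  by (simp add: H2_iff_summable_taylor_coeff)

lemma H2_add: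
  assumes "g \<in> H2" "h \<in> H2"
  shows "(\<lambda>z. g z + h z) \<in> H2"
proof -
  have bound: "norm ((norm (taylor_coeff g n + taylor_coeff h n))\<^sup>2)
          \<le> 2 * (norm (taylor_coeff g n))\<^sup>2 + 2 * (norm (taylor_coeff h n))\<^sup>2" for n
  proof -
    have "(norm (taylor_coeff g n + taylor_coeff h n))\<^sup>2
            \<le> (norm (taylor_coeff g n) + norm (taylor_coeff h n))\<^sup>2"
      by (intro power_mono norm_triangle_ineq) simp
    also have "\<dots> \<le> 2 * (norm (taylor_coeff g n))\<^sup>2 + 2 * (norm (taylor_coeff h n))\<^sup>2"
      using sum_squares_bound[of "norm (taylor_coeff g n)" "norm (taylor_coeff h n)"]
      by (simp add: power2_sum)
    finally show ?thesis
      by simp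
  qed
  have "summable (\<lambda>n. 2 * (norm (taylor_coeff g n))\<^sup>2 + 2 * (norm (taylor_coeff h n))\<^sup>2)"
    using assms by (intro summable_add summable_mult H2_imp_summable_taylor_coeff)
  then have "summable (\<lambda>n. (norm (taylor_coeff g n + taylor_coeff h n))\<^sup>2)"
    using bound by (rule summable_comparison_test')
  then show ?thesis
    using assms by (simp add: H2_iff_summable_taylor_coeff taylor_coeff_add holomorphic_intros)
qed

lemma H2_cmult:
  assumes "g \<in> H2"
  shows "(\<lambda>z. c * g z) \<in> H2"
proof -
  have "summable (\<lambda>n. (norm c)\<^sup>2 * (norm (taylor_coeff g n))\<^sup>2)"
    using assms by (intro summable_mult H2_imp_summable_taylor_coeff)
  then show ?thesis
    using assms by (simp add: H2_iff_summable_taylor_coeff taylor_coeff_cmult holomorphic_intros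
        norm_mult power_mult_distrib)
qed

lemma H2_diff: "g \<in> H2 \<Longrightarrow> h \<in> H2 \<Longrightarrow> (\<lambda>z. g z - h z) \<in> H2"
  using H2_add[OF _ H2_cmult, of g h "-1"] by simp

lemma H2_sum: "finite A \<Longrightarrow> (\<And>j. j \<in> A \<Longrightarrow> G j \<in> H2) \<Longrightarrow> (\<lambda>z. \<Sum>j\<in>A. G j z) \<in> H2"
  by (induction A rule: finite_induct) (simp_all add: H2_zero H2_add)

lemma summable_taylor_coeff_product:
  "g \<in> H2 \<Longrightarrow> h \<in> H2 \<Longrightarrow> summable (\<lambda>n. taylor_coeff g n * cnj (taylor_coeff h n))"
  by (rule summable_norm_cancel[OF summable_norm_taylor_coeff_product])

lemma h2_inner_zero_left: "h \<in> H2 \<Longrightarrow> h2_inner (\<lambda>z. 0) h = 0"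
  by (simp add: h2_inner_eq_suminf H2_zero)

lemma h2_inner_add_left:
  assumes "g \<in> H2" "g' \<in> H2" "h \<in> H2"
  shows "h2_inner (\<lambda>z. g z + g' z) h = h2_inner g h + h2_inner g' h"
  using assms H2_add[of g g'] summable_taylor_coeff_product[of _ h]
  by (simp add: h2_inner_eq_suminf taylor_coeff_add H2_imp_holomorphic distrib_right suminf_add)

lemma h2_inner_diff_left:
  assumes "g \<in> H2" "g' \<in> H2" "h \<in> H2"
  shows "h2_inner (\<lambda>z. g z - g' z) h = h2_inner g h - h2_inner g' h"
  using assms H2_diff[of g g'] summable_taylor_coeff_product[of _ h]
  by (simp add: h2_inner_eq_suminf taylor_coeff_diff H2_imp_holomorphic left_diff_distrib
      suminf_diff)

lemma h2_inner_commute: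
  assumes "g \<in> H2" "h \<in> H2"
  shows "h2_inner h g = cnj (h2_inner g h)"
proof -
  have "(\<lambda>n. cnj (taylor_coeff g n * cnj (taylor_coeff h n)))
          sums cnj (\<Sum>n. taylor_coeff g n * cnj (taylor_coeff h n))"
    using summable_taylor_coeff_product[OF assms] by (simp only: sums_cnj summable_sums)
  then show ?thesis
    using assms by (simp add: h2_inner_eq_suminf sums_iff mult.commute)
qed

lemma h2_inner_diff_right:
  assumes "g \<in> H2" "h \<in> H2" "h' \<in> H2"
  shows "h2_inner g (\<lambda>z. h z - h' z) = h2_inner g h - h2_inner g h'"
proof -
  have "h2_inner g (\<lambda>z. h z - h' z) = cnj (h2_inner (\<lambda>z. h z - h' z) g)"
    by (rule h2_inner_commute[OF H2_diff[OF assms(2,3)] assms(1)])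
  also have "\<dots> = h2_inner g h - h2_inner g h'"
    using assms by (simp add: h2_inner_diff_left h2_inner_commute[of _ g])
  finally show ?thesis .
qed

lemma h2_inner_sum_left:
  assumes "finite A" "\<And>j. j \<in> A \<Longrightarrow> G j \<in> H2" "h \<in> H2"
  shows "h2_inner (\<lambda>z. \<Sum>j\<in>A. G j z) h = (\<Sum>j\<in>A. h2_inner (G j) h)"
  using assms(1,2)
  by (induction A rule: finite_induct)
     (simp_all add: assms(3) h2_inner_zero_left h2_inner_add_left H2_sum)

lemma h2_inner_sum_right:
  assumes "finite A" "\<And>j. j \<in> A \<Longrightarrow> G j \<in> H2" "h \<in> H2"
  shows "h2_inner h (\<lambda>z. \<Sum>j\<in>A. G j z) = (\<Sum>j\<in>A. h2_inner h (G j))"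
proof -
  have "h2_inner h (\<lambda>z. \<Sum>j\<in>A. G j z) = cnj (h2_inner (\<lambda>z. \<Sum>j\<in>A. G j z) h)"
    by (rule h2_inner_commute[OF H2_sum[OF assms(1,2)] assms(3)])
  also have "\<dots> = (\<Sum>j\<in>A. h2_inner h (G j))"
    using assms by (simp add: h2_inner_sum_left cnj_sum h2_inner_commute[of _ h])
  finally show ?thesis .
qed

lemma h2_inner_self_eq_suminf:
  assumes "g \<in> H2"
  shows "h2_inner g g = of_real (\<Sum>n. (norm (taylor_coeff g n))\<^sup>2)"
proof -
  have "h2_inner g g = (\<Sum>n. complex_of_real ((norm (taylor_coeff g n))\<^sup>2))"
    unfolding h2_inner_eq_suminf[OF assms assms] complex_norm_square ..
  also have "\<dots> = of_real (\<Sum>n. (norm (taylor_coeff g n))\<^sup>2)"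
    by (rule suminf_of_real[OF H2_imp_summable_taylor_coeff[OF assms], symmetric])
  finally show ?thesis .
qed

lemma h2_norm_eq_sqrt_suminf:
  "g \<in> H2 \<Longrightarrow> h2_norm g = sqrt (\<Sum>n. (norm (taylor_coeff g n))\<^sup>2)"
  by (simp add: h2_norm_def h2_inner_self_eq_suminf)

lemma h2_norm_sq: "g \<in> H2 \<Longrightarrow> (h2_norm g)\<^sup>2 = (\<Sum>n. (norm (taylor_coeff g n))\<^sup>2)"
  by (simp add: h2_norm_eq_sqrt_suminf suminf_nonneg H2_imp_summable_taylor_coeff)

lemma h2_norm_nonneg: "g \<in> H2 \<Longrightarrow> 0 \<le> h2_norm g"
  by (simp add: h2_norm_eq_sqrt_suminf suminf_nonneg H2_imp_summable_taylor_coeff)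

lemma h2_inner_self: "g \<in> H2 \<Longrightarrow> h2_inner g g = of_real ((h2_norm g)\<^sup>2)"
  by (simp add: h2_norm_sq h2_inner_self_eq_suminf)

lemma h2_cauchy_schwarz:
  assumes "g \<in> H2" "h \<in> H2"
  shows "norm (h2_inner g h) \<le> h2_norm g * h2_norm h"
proof -
  let ?a = "\<lambda>n. norm (taylor_coeff g n)" and ?b = "\<lambda>n. norm (taylor_coeff h n)"
  note summable =
    H2_imp_summable_taylor_coeff[OF assms(1)] H2_imp_summable_taylor_coeff[OF assms(2)]
  have "norm (h2_inner g h) \<le> (\<Sum>n. norm (taylor_coeff g n * cnj (taylor_coeff h n)))"
    unfolding h2_inner_eq_suminf[OF assms]
    by (rule summable_norm[OF summable_norm_taylor_coeff_product[OF assms]])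
  also have "\<dots> \<le> h2_norm g * h2_norm h"
  proof (rule suminf_le_const[OF summable_norm_taylor_coeff_product[OF assms]])
    fix N
    have "(\<Sum>n<N. norm (taylor_coeff g n * cnj (taylor_coeff h n))) = (\<Sum>n<N. \<bar>?a n\<bar> * \<bar>?b n\<bar>)"
      by (simp add: norm_mult)
    also have "\<dots> \<le> L2_set ?a {..<N} * L2_set ?b {..<N}"
      by (rule L2_set_mult_ineq)
    also have "\<dots> \<le> h2_norm g * h2_norm h"
      unfolding L2_set_def h2_norm_eq_sqrt_suminf[OF assms(1)] h2_norm_eq_sqrt_suminf[OF assms(2)]
      using summable
      by (intro mult_mono real_sqrt_le_mono sum_le_suminf) (auto intro: suminf_nonneg sum_nonneg)
    finally show "(\<Sum>n<N. norm (taylor_coeff g n * cnj (taylor_coeff h n)))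
                    \<le> h2_norm g * h2_norm h" .
  qed
  finally show ?thesis .
qed

lemma h2_inner_tendsto:
  assumes g: "g \<in> H2" "\<And>M. gs M \<in> H2" "(\<lambda>M. h2_norm (\<lambda>z. g z - gs M z)) \<longlonglongrightarrow> 0"
    and h: "h \<in> H2" "\<And>M. hs M \<in> H2" "(\<lambda>M. h2_norm (\<lambda>z. h z - hs M z)) \<longlonglongrightarrow> 0"
  shows "(\<lambda>M. h2_inner (gs M) (hs M)) \<longlonglongrightarrow> h2_inner g h"
proof -
  define dg where "dg M = (\<lambda>z. g z - gs M z)" for M
  define dh where "dh M = (\<lambda>z. h z - hs M z)" for M
  have d: "dg M \<in> H2" "dh M \<in> H2" for M
    unfolding dg_def dh_def using g h by (auto intro: H2_diff)
  have bound: "norm (h2_inner g h - h2_inner (gs M) (hs M))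
      \<le> h2_norm (dg M) * h2_norm h + h2_norm g * h2_norm (dh M)
          + h2_norm (dg M) * h2_norm (dh M)" for M
  proof -
    have split: "h2_inner g h - h2_inner (gs M) (hs M)
            = h2_inner (dg M) h + h2_inner g (dh M) - h2_inner (dg M) (dh M)"
      unfolding dg_def dh_def using g h H2_diff
      by (simp add: h2_inner_diff_left h2_inner_diff_right)
    show ?thesis
      unfolding split
      using norm_triangle_ineq4[of "h2_inner (dg M) h + h2_inner g (dh M)" "h2_inner (dg M) (dh M)"]
        norm_triangle_ineq[of "h2_inner (dg M) h" "h2_inner g (dh M)"]
        h2_cauchy_schwarz[OF d(1) h(1), of M] h2_cauchy_schwarz[OF g(1) d(2), of M]
        h2_cauchy_schwarz[OF d(1) d(2), of M M]
      by linarith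
  qed
  have "(\<lambda>M. h2_norm (dg M) * h2_norm h + h2_norm g * h2_norm (dh M)
                    + h2_norm (dg M) * h2_norm (dh M)) \<longlonglongrightarrow> 0 * h2_norm h + h2_norm g * 0 + 0 * 0"
    unfolding dg_def dh_def by (intro tendsto_intros g(3) h(3))
  then have "(\<lambda>M. h2_inner g h - h2_inner (gs M) (hs M)) \<longlonglongrightarrow> 0"
    by (intro Lim_null_comparison[OF always_eventually[OF allI[OF bound]]]) simp
  then have "(\<lambda>M. h2_inner g h - (h2_inner g h - h2_inner (gs M) (hs M))) \<longlonglongrightarrow> h2_inner g h - 0"
    by (intro tendsto_intros)
  then show ?thesis
    by simp
qed

lemma H2_polynomial: "(\<lambda>z. \<Sum>n<N. c n * z ^ n) \<in> H2"
  unfolding H2_iff_summable_taylor_coeff taylor_coeff_polynomial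
  by (auto intro!: holomorphic_intros summable_finite[of "{..<N}"] split: if_splits)

lemma h2_norm_taylor_remainder_tendsto:
  assumes "g \<in> H2"
  shows "(\<lambda>N. h2_norm (\<lambda>z. g z - (\<Sum>n<N. taylor_coeff g n * z ^ n))) \<longlonglongrightarrow> 0"
proof -
  let ?a = "\<lambda>n. (norm (taylor_coeff g n))\<^sup>2"
  have summable: "summable ?a"
    using assms by (rule H2_imp_summable_taylor_coeff)
  have remainder: "(\<lambda>z. g z - (\<Sum>n<N. taylor_coeff g n * z ^ n)) \<in> H2" for N
    using assms H2_polynomial by (rule H2_diff)
  have "(norm (taylor_coeff (\<lambda>z. g z - (\<Sum>n<N. taylor_coeff g n * z ^ n)) n))\<^sup>2
          = ?a n - (if n \<in> {..<N} then ?a n else 0)" for N n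
    using H2_imp_holomorphic[OF assms] H2_imp_holomorphic[OF H2_polynomial]
    by (simp add: taylor_coeff_diff taylor_coeff_polynomial)
  moreover have "(\<lambda>n. ?a n - (if n \<in> {..<N} then ?a n else 0))
                   sums (suminf ?a - (\<Sum>n<N. ?a n))" for N
    by (intro sums_diff summable_sums summable sums_If_finite_set) simp
  ultimately have "(h2_norm (\<lambda>z. g z - (\<Sum>n<N. taylor_coeff g n * z ^ n)))\<^sup>2
                     = suminf ?a - (\<Sum>n<N. ?a n)" for N
    unfolding h2_norm_sq[OF remainder] by (simp add: sums_iff)
  moreover have "(\<lambda>N. suminf ?a - (\<Sum>n<N. ?a n)) \<longlonglongrightarrow> suminf ?a - suminf ?a"
    by (intro tendsto_intros summable_LIMSEQ summable)
  ultimately have "(\<lambda>N. (h2_norm (\<lambda>z. g z - (\<Sum>n<N. taylor_coeff g n * z ^ n)))\<^sup>2) \<longlonglongrightarrow> 0"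
    by simp
  then have "(\<lambda>N. sqrt ((h2_norm (\<lambda>z. g z - (\<Sum>n<N. taylor_coeff g n * z ^ n)))\<^sup>2)) \<longlonglongrightarrow> sqrt 0"
    by (rule tendsto_real_sqrt)
  then show ?thesis
    using h2_norm_nonneg[OF remainder] by simp
qed

section \<open>Multiplication by bounded holomorphic functions\<close>

lemma Re_circle_mean_of_real:
  assumes "continuous_on {0..2*pi} (\<lambda>t. \<psi> (complex_of_real r * cis t))"
  shows "Re (circle_mean r (\<lambda>z. complex_of_real (\<psi> z)))
           = integral {0..2*pi} (\<lambda>t. \<psi> (complex_of_real r * cis t)) / (2 * pi)"
proof -
  have "integral {0..2*pi} (\<lambda>t. complex_of_real (\<psi> (complex_of_real r * cis t)))
          = of_real (integral {0..2*pi} (\<lambda>t. \<psi> (complex_of_real r * cis t)))"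
    by (rule integral_unique[OF has_integral_of_real[OF integrable_integral]])
       (rule integrable_continuous_real[OF assms])
  then show ?thesis
    unfolding circle_mean_def by (simp add: Re_divide_numeral)
qed

lemma circle_mean_norm_sq_tendsto:
  assumes "g \<in> H2"
  shows "((\<lambda>r. Re (circle_mean r (\<lambda>z. complex_of_real ((cmod (g z))\<^sup>2))))
           \<longlongrightarrow> (h2_norm g)\<^sup>2) (at_left 1)"
  using tendsto_Re[OF circle_mean_tendsto_h2_inner[OF assms assms]]
  by (simp add: h2_inner_self[OF assms] flip: complex_norm_square)

lemma circle_mean_norm_sq_mult_le:
  assumes w: "w holomorphic_on ball 0 1" and M: "\<And>z. z \<in> ball 0 1 \<Longrightarrow> norm (w z) \<le> M"
    and g: "g holomorphic_on ball 0 1" and r: "0 \<le> r" "r < 1"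
  shows "Re (circle_mean r (\<lambda>z. complex_of_real ((cmod (w z * g z))\<^sup>2)))
           \<le> M\<^sup>2 * Re (circle_mean r (\<lambda>z. complex_of_real ((cmod (g z))\<^sup>2)))"
proof -
  let ?z = "\<lambda>t. complex_of_real r * cis t"
  have cont: "continuous_on {0..2*pi} (\<lambda>t. k (?z t))" if "k holomorphic_on ball 0 1" for k
    using continuous_on_compose_circle[OF holomorphic_on_imp_continuous_on[OF that]]
      circle_in_ball[OF r] by blast
  have c1: "continuous_on {0..2*pi} (\<lambda>t. (cmod (w (?z t) * g (?z t)))\<^sup>2)"
    and c2: "continuous_on {0..2*pi} (\<lambda>t. (cmod (g (?z t)))\<^sup>2)"
    and c3: "continuous_on {0..2*pi} (\<lambda>t. M\<^sup>2 * (cmod (g (?z t)))\<^sup>2)"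
    using cont[OF w] cont[OF g] by (auto intro!: continuous_intros)
  have "(cmod (w (?z t) * g (?z t)))\<^sup>2 \<le> M\<^sup>2 * (cmod (g (?z t)))\<^sup>2" for t
    using M[OF circle_in_ball[OF r]] norm_ge_zero[of "w (?z t)"]
    by (simp add: norm_mult power_mult_distrib mult_right_mono power_mono)
  then have "integral {0..2*pi} (\<lambda>t. (cmod (w (?z t) * g (?z t)))\<^sup>2)
      \<le> integral {0..2*pi} (\<lambda>t. M\<^sup>2 * (cmod (g (?z t)))\<^sup>2)"
    by (rule integral_le[OF integrable_continuous_real[OF c1] integrable_continuous_real[OF c3]])
  then show ?thesis
    unfolding Re_circle_mean_of_real[OF c1] Re_circle_mean_of_real[OF c2]
    by (simp add: divide_right_mono)
qed

lemma H2_mult_bounded: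
  assumes w: "w holomorphic_on ball 0 1" and M: "\<And>z. z \<in> ball 0 1 \<Longrightarrow> norm (w z) \<le> M"
    and g: "g \<in> H2"
  shows "(\<lambda>z. w z * g z) \<in> H2" and "h2_norm (\<lambda>z. w z * g z) \<le> M * h2_norm g"
proof -
  note circle_mean_le = circle_mean_norm_sq_mult_le[OF w M H2_imp_holomorphic[OF g]]
  obtain B where
    B: "\<And>r. r \<in> {0..<1} \<Longrightarrow> Re (circle_mean r (\<lambda>z. complex_of_real ((cmod (g z))\<^sup>2))) \<le> B"
    using g unfolding H2_def by blast
  have "Re (circle_mean r (\<lambda>z. complex_of_real ((cmod (w z * g z))\<^sup>2))) \<le> M\<^sup>2 * B"
    if "r \<in> {0..<1}" for r
    using that
    by (intro order_trans[OF circle_mean_le mult_left_mono[OF B[OF that] zero_le_power2]]) auto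
  moreover have "(\<lambda>z. w z * g z) holomorphic_on ball 0 1"
    using w H2_imp_holomorphic[OF g] by (intro holomorphic_intros)
  ultimately show wg: "(\<lambda>z. w z * g z) \<in> H2"
    unfolding H2_def by blast
  have "(h2_norm (\<lambda>z. w z * g z))\<^sup>2 \<le> M\<^sup>2 * (h2_norm g)\<^sup>2"
  proof (rule tendsto_le[OF trivial_limit_at_left_real _ circle_mean_norm_sq_tendsto[OF wg]])
    show "((\<lambda>r. M\<^sup>2 * Re (circle_mean r (\<lambda>z. complex_of_real ((cmod (g z))\<^sup>2))))
            \<longlongrightarrow> M\<^sup>2 * (h2_norm g)\<^sup>2) (at_left 1)"
      by (rule tendsto_mult_left[OF circle_mean_norm_sq_tendsto[OF g]])
    show "\<forall>\<^sub>F r in at_left 1. Re (circle_mean r (\<lambda>z. complex_of_real ((cmod (w z * g z))\<^sup>2)))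
            \<le> M\<^sup>2 * Re (circle_mean r (\<lambda>z. complex_of_real ((cmod (g z))\<^sup>2)))"
      using eventually_at_left_real[OF zero_less_one]
      by (rule eventually_mono) (rule circle_mean_le; simp)
  qed
  then have "(h2_norm (\<lambda>z. w z * g z))\<^sup>2 \<le> (M * h2_norm g)\<^sup>2"
    by (simp add: power_mult_distrib)
  moreover have "0 \<le> M * h2_norm g"
    using order_trans[OF norm_ge_zero M[of 0]] h2_norm_nonneg[OF g]
    by (simp add: mult_nonneg_nonneg)
  ultimately show "h2_norm (\<lambda>z. w z * g z) \<le> M * h2_norm g"
    by (rule power2_le_imp_le)
qed

lemma h2_norm_mult_bounded_diff_tendsto:
  assumes w: "w holomorphic_on ball 0 1" and M: "\<And>z. z \<in> ball 0 1 \<Longrightarrow> norm (w z) \<le> M"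
    and g: "g \<in> H2" "\<And>N. gs N \<in> H2" "(\<lambda>N. h2_norm (\<lambda>z. g z - gs N z)) \<longlonglongrightarrow> 0"
  shows "(\<lambda>N. h2_norm (\<lambda>z. w z * g z - w z * gs N z)) \<longlonglongrightarrow> 0"
proof -
  have "(\<lambda>N. M * h2_norm (\<lambda>z. g z - gs N z)) \<longlonglongrightarrow> 0"
    using tendsto_mult_left[OF g(3), of M] by simp
  then show ?thesis
  proof (rule tendsto_sandwich[OF _ _ tendsto_const, rotated 2])
    have "(\<lambda>z. w z * g z - w z * gs N z) = (\<lambda>z. w z * (g z - gs N z))" for N
      by (simp add: right_diff_distrib)
    then have "(\<lambda>z. w z * g z - w z * gs N z) \<in> H2"
      and "h2_norm (\<lambda>z. w z * g z - w z * gs N z) \<le> M * h2_norm (\<lambda>z. g z - gs N z)" for N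
      using H2_mult_bounded[OF w M H2_diff[OF g(1,2)]] by simp_all
    then show "\<forall>\<^sub>F N in sequentially. 0 \<le> h2_norm (\<lambda>z. w z * g z - w z * gs N z)"
      and "\<forall>\<^sub>F N in sequentially.
             h2_norm (\<lambda>z. w z * g z - w z * gs N z) \<le> M * h2_norm (\<lambda>z. g z - gs N z)"
      by (simp_all add: h2_norm_nonneg)
  qed
qed

section \<open>Inner functions act isometrically\<close>

lemma inner_function_bounded:
  assumes "inner_function u"
  obtains M where "\<And>z. z \<in> ball 0 1 \<Longrightarrow> norm (u z) \<le> M"
  using assms unfolding inner_function_def bounded_iff by blast

lemma inner_function_holomorphic: "inner_function u \<Longrightarrow> u holomorphic_on ball 0 1"
  unfolding inner_function_def by blast

lemma inner_function_one: "inner_function (\<lambda>z. 1)"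
  unfolding inner_function_def bounded_iff by (auto intro!: AE_I2 exI[of _ 1])

lemma inner_function_power:
  assumes "inner_function u"
  shows "inner_function (\<lambda>z. u z ^ n)"
proof -
  obtain M where M: "\<And>z. z \<in> ball 0 1 \<Longrightarrow> norm (u z) \<le> M"
    using inner_function_bounded[OF assms] by blast
  have bounded: "bounded ((\<lambda>z. u z ^ n) ` ball 0 1)"
    unfolding bounded_iff using M by (auto simp: norm_power intro!: exI[of _ "M ^ n"] power_mono)
  have "AE t in lebesgue_on {0..2*pi}.
      \<exists>L. ((\<lambda>r. u (complex_of_real r * cis t)) \<longlongrightarrow> L) (at_left 1) \<and> cmod L = 1"
    using assms unfolding inner_function_def by blast
  then have "AE t in lebesgue_on {0..2*pi}.
      \<exists>L. ((\<lambda>r. u (complex_of_real r * cis t) ^ n) \<longlongrightarrow> L) (at_left 1) \<and> cmod L = 1"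
    by (rule eventually_mono) (metis tendsto_power norm_power power_one)
  with bounded show ?thesis
    using inner_function_holomorphic[OF assms] unfolding inner_function_def
    by (auto intro!: holomorphic_intros)
qed

lemma H2_mult_inner_function: "inner_function u \<Longrightarrow> g \<in> H2 \<Longrightarrow> (\<lambda>z. u z * g z) \<in> H2"
  by (metis H2_mult_bounded(1) inner_function_bounded inner_function_holomorphic)

lemma circle_in_cball: "0 \<le> r \<Longrightarrow> r \<le> 1 \<Longrightarrow> complex_of_real r * cis t \<in> cball 0 1"
  by (simp add: norm_mult)

lemma circle_mean_eq_lebesgue_integral:
  assumes "continuous_on {0..2*pi} (\<lambda>t. h (complex_of_real r * cis t))"
  shows "circle_mean r h
           = integral\<^sup>L (lebesgue_on {0..2*pi}) (\<lambda>t. h (complex_of_real r * cis t)) / (2 * pi)"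
  unfolding circle_mean_def
  by (subst lebesgue_integral_eq_integral[OF continuous_imp_integrable_real[OF assms]]) auto

lemma radial_mult_cnj_tendsto:
  assumes L: "((\<lambda>r. u (complex_of_real r * cis t)) \<longlongrightarrow> L) (at_left 1)" "cmod L = 1"
    and p: "continuous_on (cball 0 1) p" and q: "continuous_on (cball 0 1) q"
    and S: "\<And>n. 0 < S n" "\<And>n. S n < 1" "S \<longlonglongrightarrow> 1"
  shows "(\<lambda>n. (u (complex_of_real (S n) * cis t) * p (complex_of_real (S n) * cis t)) *
              cnj (u (complex_of_real (S n) * cis t) * q (complex_of_real (S n) * cis t)))
           \<longlonglongrightarrow> p (cis t) * cnj (q (cis t))"
proof -
  have "(\<lambda>n. complex_of_real (S n) * cis t) \<longlonglongrightarrow> cis t"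
    using S(3) by (auto intro!: tendsto_eq_intros)
  moreover have "\<forall>\<^sub>F n in sequentially. complex_of_real (S n) * cis t \<in> cball 0 1"
    using S(1,2) by (intro always_eventually allI circle_in_cball) (auto intro: less_imp_le)
  ultimately have "(\<lambda>n. p (complex_of_real (S n) * cis t)) \<longlonglongrightarrow> p (cis t)"
    and "(\<lambda>n. q (complex_of_real (S n) * cis t)) \<longlonglongrightarrow> q (cis t)"
    by (auto intro: continuous_on_tendsto_compose[OF p] continuous_on_tendsto_compose[OF q])
  moreover have "(\<lambda>n. u (complex_of_real (S n) * cis t)) \<longlonglongrightarrow> L"
    using S by (intro filterlim_compose[OF L(1)] tendsto_imp_filterlim_at_left) auto
  ultimately have "(\<lambda>n. (u (complex_of_real (S n) * cis t) * p (complex_of_real (S n) * cis t)) *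
              cnj (u (complex_of_real (S n) * cis t) * q (complex_of_real (S n) * cis t)))
           \<longlonglongrightarrow> (L * cnj L) * (p (cis t) * cnj (q (cis t)))"
    by (auto intro!: tendsto_eq_intros)
  then show ?thesis
    using L(2) by (simp flip: complex_norm_square)
qed

lemma circle_mean_inner_function_tendsto:
  assumes u: "inner_function u"
    and p: "continuous_on (cball 0 1) p" and q: "continuous_on (cball 0 1) q"
  shows "((\<lambda>r. circle_mean r (\<lambda>z. (u z * p z) * cnj (u z * q z))) \<longlongrightarrow>
           integral\<^sup>L (lebesgue_on {0..2*pi}) (\<lambda>t. p (cis t) * cnj (q (cis t))) / (2 * pi))
         (at_left 1)"
proof -
  obtain M where M: "\<And>z. z \<in> ball 0 1 \<Longrightarrow> norm (u z) \<le> M"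
    using inner_function_bounded[OF u] by blast
  obtain Kp where Kp: "\<And>z. z \<in> cball 0 1 \<Longrightarrow> norm (p z) \<le> Kp"
    using compact_imp_bounded[OF compact_continuous_image[OF p compact_cball]]
    unfolding bounded_iff by blast
  obtain Kq where Kq: "\<And>z. z \<in> cball 0 1 \<Longrightarrow> norm (q z) \<le> Kq"
    using compact_imp_bounded[OF compact_continuous_image[OF q compact_cball]]
    unfolding bounded_iff by blast
  have ae: "AE t in lebesgue_on {0..2*pi}.
      \<exists>L. ((\<lambda>r. u (complex_of_real r * cis t)) \<longlongrightarrow> L) (at_left 1) \<and> cmod L = 1"
    using u unfolding inner_function_def by blast
  define F where "F r t = (u (complex_of_real r * cis t) * p (complex_of_real r * cis t)) *
      cnj (u (complex_of_real r * cis t) * q (complex_of_real r * cis t))" for r t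
  define f where "f = (\<lambda>t. p (cis t) * cnj (q (cis t)))"
  have F_cont: "continuous_on {0..2*pi} (F r)" if "0 \<le> r" "r < 1" for r
  proof -
    have "continuous_on {0..2*pi} (\<lambda>t. u (complex_of_real r * cis t))"
      using continuous_on_compose_circle[OF holomorphic_on_imp_continuous_on]
        inner_function_holomorphic[OF u] circle_in_ball that by blast
    moreover have "continuous_on {0..2*pi} (\<lambda>t. p (complex_of_real r * cis t))"
      and "continuous_on {0..2*pi} (\<lambda>t. q (complex_of_real r * cis t))"
      using continuous_on_compose_circle[OF p] continuous_on_compose_circle[OF q]
        circle_in_cball that by auto
    ultimately show ?thesis
      unfolding F_def by (intro continuous_intros)
  qed
  have f_cont: "continuous_on {0..2*pi} f"
    unfolding f_def
    using continuous_on_compose_circle[OF p, of 1] continuous_on_compose_circle[OF q, of 1]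
    by (auto intro!: continuous_intros)
  have F_bound: "norm (F r t) \<le> (M * Kp) * (M * Kq)" if "0 \<le> r" "r < 1" for r t
  proof -
    have bounds: "norm (u (complex_of_real r * cis t)) \<le> M"
      "norm (p (complex_of_real r * cis t)) \<le> Kp" "norm (q (complex_of_real r * cis t)) \<le> Kq"
      using M Kp Kq circle_in_ball circle_in_cball that by auto
    moreover have "0 \<le> M" "0 \<le> Kp"
      using order_trans[OF norm_ge_zero bounds(1)] order_trans[OF norm_ge_zero bounds(2)] .
    ultimately show ?thesis
      unfolding F_def norm_mult complex_mod_cnj by (intro mult_mono) auto
  qed
  show ?thesis
  proof (rule tendsto_at_left_sequentially[of 0])
    fix S :: "nat \<Rightarrow> real"
    assume S: "\<And>n. S n < 1" "\<And>n. 0 < S n" "S \<longlonglongrightarrow> 1"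
    have "(\<lambda>n. integral\<^sup>L (lebesgue_on {0..2*pi}) (F (S n))) \<longlonglongrightarrow> integral\<^sup>L (lebesgue_on {0..2*pi}) f"
    proof (rule integral_dominated_convergence[where w = "\<lambda>_. (M * Kp) * (M * Kq)"])
      show "f \<in> borel_measurable (lebesgue_on {0..2*pi})"
        using borel_measurable_integrable[OF continuous_imp_integrable_real[OF f_cont]] .
      show "F (S n) \<in> borel_measurable (lebesgue_on {0..2*pi})" for n
        using S(1,2)[of n]
        by (intro borel_measurable_integrable continuous_imp_integrable_real F_cont) auto
      show "integrable (lebesgue_on {0..2*pi}) (\<lambda>_. (M * Kp) * (M * Kq))"
        by (rule continuous_imp_integrable_real) (rule continuous_on_const)
      show "AE t in lebesgue_on {0..2*pi}. norm (F (S n) t) \<le> (M * Kp) * (M * Kq)" for n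
        using S(1,2)[of n] by (intro AE_I2 F_bound) auto
      show "AE t in lebesgue_on {0..2*pi}. (\<lambda>n. F (S n) t) \<longlonglongrightarrow> f t"
        using ae by (rule eventually_mono)
          (use S in \<open>auto simp only: F_def f_def intro: radial_mult_cnj_tendsto[OF _ _ p q]\<close>)
    qed
    then have "(\<lambda>n. integral\<^sup>L (lebesgue_on {0..2*pi}) (F (S n)) / (2 * pi))
        \<longlonglongrightarrow> integral\<^sup>L (lebesgue_on {0..2*pi}) f / (2 * pi)"
      by (rule tendsto_divide) simp_all
    moreover have "circle_mean (S n) (\<lambda>z. (u z * p z) * cnj (u z * q z))
        = integral\<^sup>L (lebesgue_on {0..2*pi}) (F (S n)) / (2 * pi)" for n
      using circle_mean_eq_lebesgue_integral F_cont[of "S n"] S(1,2)[of n] unfolding F_def by auto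
    ultimately show "(\<lambda>n. circle_mean (S n) (\<lambda>z. (u z * p z) * cnj (u z * q z)))
        \<longlonglongrightarrow> integral\<^sup>L (lebesgue_on {0..2*pi}) (\<lambda>t. p (cis t) * cnj (q (cis t))) / (2 * pi)"
      by (simp add: f_def)
  qed simp
qed

text \<open>Both sides equal the same boundary integral; the right-hand side is the case u = 1.\<close>

lemma h2_inner_mult_inner_function_continuous:
  assumes u: "inner_function u"
    and p: "continuous_on (cball 0 1) p" and q: "continuous_on (cball 0 1) q"
  shows "h2_inner (\<lambda>z. u z * p z) (\<lambda>z. u z * q z) = h2_inner p q"
proof -
  have "h2_inner (\<lambda>z. u z * p z) (\<lambda>z. u z * q z)
          = integral\<^sup>L (lebesgue_on {0..2*pi}) (\<lambda>t. p (cis t) * cnj (q (cis t))) / (2 * pi)"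
    unfolding h2_inner_def
    by (rule tendsto_Lim[OF _ circle_mean_inner_function_tendsto[OF u p q]]) simp
  moreover have "h2_inner p q
          = integral\<^sup>L (lebesgue_on {0..2*pi}) (\<lambda>t. p (cis t) * cnj (q (cis t))) / (2 * pi)"
    unfolding h2_inner_def
    using tendsto_Lim[OF _ circle_mean_inner_function_tendsto[OF inner_function_one p q]] by simp
  ultimately show ?thesis
    by simp
qed

text \<open>Approximate by Taylor polynomials, which are continuous on the closed disk.\<close>

lemma h2_inner_mult_inner_function:
  assumes u: "inner_function u" and g: "g \<in> H2" and h: "h \<in> H2"
  shows "h2_inner (\<lambda>z. u z * g z) (\<lambda>z. u z * h z) = h2_inner g h"
proof -
  obtain M where M: "\<And>z. z \<in> ball 0 1 \<Longrightarrow> norm (u z) \<le> M"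
    using inner_function_bounded[OF u] by blast
  note mult_tendsto = h2_norm_mult_bounded_diff_tendsto[OF inner_function_holomorphic[OF u] M]
  define gs where "gs N = (\<lambda>z. \<Sum>n<N. taylor_coeff g n * z ^ n)" for N
  define hs where "hs N = (\<lambda>z. \<Sum>n<N. taylor_coeff h n * z ^ n)" for N
  have polys: "gs N \<in> H2" "hs N \<in> H2"
    "continuous_on (cball 0 1) (gs N)" "continuous_on (cball 0 1) (hs N)" for N
    unfolding gs_def hs_def by (auto intro!: H2_polynomial continuous_intros)
  have approx: "(\<lambda>N. h2_norm (\<lambda>z. g z - gs N z)) \<longlonglongrightarrow> 0"
    "(\<lambda>N. h2_norm (\<lambda>z. h z - hs N z)) \<longlonglongrightarrow> 0"
    unfolding gs_def hs_def using h2_norm_taylor_remainder_tendsto g h by auto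
  have "(\<lambda>N. h2_inner (\<lambda>z. u z * gs N z) (\<lambda>z. u z * hs N z)) \<longlonglongrightarrow>
          h2_inner (\<lambda>z. u z * g z) (\<lambda>z. u z * h z)"
    using g h polys approx
    by (intro h2_inner_tendsto H2_mult_inner_function[OF u] mult_tendsto) auto
  moreover have "(\<lambda>N. h2_inner (\<lambda>z. u z * gs N z) (\<lambda>z. u z * hs N z)) \<longlonglongrightarrow> h2_inner g h"
    using g h polys approx
    by (simp add: h2_inner_mult_inner_function_continuous[OF u] h2_inner_tendsto)
  ultimately show ?thesis
    by (rule LIMSEQ_unique)
qed

lemma H2_mult_inner_function_power:
  "inner_function u \<Longrightarrow> g \<in> H2 \<Longrightarrow> (\<lambda>z. u z ^ n * g z) \<in> H2"
  by (rule H2_mult_inner_function[OF inner_function_power])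

lemma h2_inner_mult_inner_function_power:
  "inner_function u \<Longrightarrow> g \<in> H2 \<Longrightarrow> h \<in> H2 \<Longrightarrow>
     h2_inner (\<lambda>z. u z ^ n * g z) (\<lambda>z. u z ^ n * h z) = h2_inner g h"
  by (rule h2_inner_mult_inner_function[OF inner_function_power])

lemma h2_norm_mult_inner_function_power:
  "inner_function u \<Longrightarrow> g \<in> H2 \<Longrightarrow> h2_norm (\<lambda>z. u z ^ n * g z) = h2_norm g"
  by (simp add: h2_norm_def h2_inner_mult_inner_function_power)

section \<open>Orthogonality of the subspaces u^j K_u\<close>

lemma model_space_imp_H2: "g \<in> model_space u \<Longrightarrow> g \<in> H2"
  unfolding model_space_def by blast

lemma h2_inner_model_space_power_mult:
  assumes u: "inner_function u" and G: "G \<in> model_space u" and h: "h \<in> H2" and "0 < d"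
  shows "h2_inner G (\<lambda>z. u z ^ d * h z) = 0"
proof -
  have "(\<lambda>z. u z ^ d * h z) = (\<lambda>z. u z * (u z ^ (d - 1) * h z))"
    using \<open>0 < d\<close> by (simp add: power_eq_if mult.assoc)
  then show ?thesis
    using G H2_mult_inner_function_power[OF u h] unfolding model_space_def by auto
qed

lemma h2_inner_model_space_powers:
  assumes u: "inner_function u" and F: "F \<in> model_space u" and G: "G \<in> model_space u"
  shows "h2_inner (\<lambda>z. u z ^ m * F z) (\<lambda>z. u z ^ n * G z) = (if m = n then h2_inner F G else 0)"
proof -
  have FH: "F \<in> H2" and GH: "G \<in> H2"
    using F G by (auto intro: model_space_imp_H2)
  consider d where "n = m + d" | d where "m = n + d" "0 < d"
    by (metis less_imp_add_positive nat_le_iff_add not_le)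
  then show ?thesis
  proof cases
    case (1 d)
    then have "h2_inner (\<lambda>z. u z ^ m * F z) (\<lambda>z. u z ^ n * G z)
        = h2_inner (\<lambda>z. u z ^ m * F z) (\<lambda>z. u z ^ m * (u z ^ d * G z))"
      by (simp add: power_add mult.assoc)
    also have "\<dots> = h2_inner F (\<lambda>z. u z ^ d * G z)"
      by (rule h2_inner_mult_inner_function_power[OF u FH H2_mult_inner_function_power[OF u GH]])
    also have "\<dots> = (if m = n then h2_inner F G else 0)"
      using 1 h2_inner_model_space_power_mult[OF u F GH, of d] by auto
    finally show ?thesis .
  next
    case (2 d)
    then have "h2_inner (\<lambda>z. u z ^ m * F z) (\<lambda>z. u z ^ n * G z)
        = h2_inner (\<lambda>z. u z ^ n * (u z ^ d * F z)) (\<lambda>z. u z ^ n * G z)"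
      by (simp add: power_add mult.assoc)
    also have "\<dots> = h2_inner (\<lambda>z. u z ^ d * F z) G"
      by (rule h2_inner_mult_inner_function_power[OF u H2_mult_inner_function_power[OF u FH] GH])
    also have "\<dots> = cnj (h2_inner G (\<lambda>z. u z ^ d * F z))"
      by (rule h2_inner_commute[OF GH H2_mult_inner_function_power[OF u FH]])
    also have "\<dots> = (if m = n then h2_inner F G else 0)"
      using 2 h2_inner_model_space_power_mult[OF u G FH, of d] by auto
    finally show ?thesis .
  qed
qed

lemma h2_inner_power_mult_model_space_partial_sum:
  assumes u: "inner_function u" and F: "\<And>j. F j \<in> model_space u"
  shows "h2_inner (\<lambda>z. u z ^ n * (\<Sum>j<M. u z ^ j * F j z)) (\<lambda>z. \<Sum>j<M. u z ^ j * F j z)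
           = (\<Sum>j<M - n. h2_inner (F j) (F (n + j)))"
proof -
  have terms: "(\<lambda>z. u z ^ k * F j z) \<in> H2" for j k
    by (rule H2_mult_inner_function_power[OF u model_space_imp_H2[OF F]])
  have "(\<lambda>z. u z ^ n * (\<Sum>j<M. u z ^ j * F j z)) = (\<lambda>z. \<Sum>j<M. u z ^ (n + j) * F j z)"
    by (simp add: sum_distrib_left power_add mult.assoc)
  then have "h2_inner (\<lambda>z. u z ^ n * (\<Sum>j<M. u z ^ j * F j z)) (\<lambda>z. \<Sum>j<M. u z ^ j * F j z)
      = (\<Sum>j<M. \<Sum>k<M. h2_inner (\<lambda>z. u z ^ (n + j) * F j z) (\<lambda>z. u z ^ k * F k z))"
    by (simp add: h2_inner_sum_left h2_inner_sum_right terms H2_sum)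
  also have "\<dots> = (\<Sum>j<M. \<Sum>k<M. if n + j = k then h2_inner (F j) (F k) else 0)"
    by (simp add: h2_inner_model_space_powers[OF u F F])
  also have "\<dots> = (\<Sum>j\<in>{..<M} \<inter> {j. n + j < M}. h2_inner (F j) (F (n + j)))"
    by (simp add: sum.inter_restrict)
  also have "{..<M} \<inter> {j. n + j < M} = {..<M - n}"
    by auto
  finally show ?thesis .
qed

lemma model_space_expansion_inner_sums:
  assumes u: "inner_function u" and f: "f \<in> H2" and F: "\<And>j. F j \<in> model_space u"
    and expansion: "(\<lambda>M. h2_norm (\<lambda>z. f z - (\<Sum>j<M. u z ^ j * F j z))) \<longlonglongrightarrow> 0"
  shows "(\<lambda>k. h2_inner (F k) (F (n + k))) sums h2_inner (\<lambda>z. u z ^ n * f z) f"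
proof -
  define S where "S M = (\<lambda>z. \<Sum>j<M. u z ^ j * F j z)" for M
  have S: "S M \<in> H2" for M
    unfolding S_def using H2_mult_inner_function_power[OF u model_space_imp_H2[OF F]]
    by (intro H2_sum) auto
  have S_lim: "(\<lambda>M. h2_norm (\<lambda>z. f z - S M z)) \<longlonglongrightarrow> 0"
    using expansion by (simp add: S_def)
  have "(\<lambda>z. u z ^ n * f z - u z ^ n * S M z) = (\<lambda>z. u z ^ n * (f z - S M z))" for M
    by (simp add: right_diff_distrib)
  then have "h2_norm (\<lambda>z. u z ^ n * f z - u z ^ n * S M z) = h2_norm (\<lambda>z. f z - S M z)" for M
    using h2_norm_mult_inner_function_power[OF u H2_diff[OF f S]] by simp
  then have uS_lim: "(\<lambda>M. h2_norm (\<lambda>z. u z ^ n * f z - u z ^ n * S M z)) \<longlonglongrightarrow> 0"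
    using S_lim by simp
  have "(\<lambda>M. h2_inner (\<lambda>z. u z ^ n * S M z) (S M)) \<longlonglongrightarrow> h2_inner (\<lambda>z. u z ^ n * f z) f"
    by (rule h2_inner_tendsto[OF H2_mult_inner_function_power[OF u f]
          H2_mult_inner_function_power[OF u S] uS_lim f S S_lim])
  moreover have "h2_inner (\<lambda>z. u z ^ n * S M z) (S M)
                   = (\<Sum>j<M - n. h2_inner (F j) (F (n + j)))" for M
    unfolding S_def by (rule h2_inner_power_mult_model_space_partial_sum[OF u F])
  ultimately have "(\<lambda>M. \<Sum>j<M - n. h2_inner (F j) (F (n + j))) \<longlonglongrightarrow> h2_inner (\<lambda>z. u z ^ n * f z) f"
    by simp
  then have "(\<lambda>K. \<Sum>j<K + n - n. h2_inner (F j) (F (n + j))) \<longlonglongrightarrow> h2_inner (\<lambda>z. u z ^ n * f z) f"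
    by (rule LIMSEQ_ignore_initial_segment)
  then show ?thesis
    unfolding sums_def by simp
qed

theorem proposition3p1:
  fixes u f :: "complex \<Rightarrow> complex" and F :: "nat \<Rightarrow> complex \<Rightarrow> complex"
  assumes "inner_function u"
    and "f \<in> H2" and "h2_norm f = 1"
    and "\<And>j. F j \<in> model_space u"
    and "(\<lambda>n. h2_norm (\<lambda>z. f z - (\<Sum>j<n. u z ^ j * F j z))) \<longlonglongrightarrow> 0"
  shows "Tu_inner u f \<longleftrightarrow>
           (\<forall>N::nat. N \<ge> 1 \<longrightarrow> (\<lambda>k. h2_inner (F k) (F (N + k))) sums 0)"
proof -
  have "(\<lambda>k. h2_inner (F k) (F (N + k))) sums 0 \<longleftrightarrow> h2_inner (\<lambda>z. u z ^ N * f z) f = 0" for N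
    using model_space_expansion_inner_sums[OF assms(1,2,4,5), of N] by (metis sums_unique2)
  then show ?thesis
    unfolding Tu_inner_def using assms(2,3) by presburger
qed
end
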